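(* Let $c_0,c_1$ be convex loops with length measures $\mu_0,\mu_1$, and let $\sigma_i\in L^1_+(S^1,\mu_i)$, $i=0,1$, be Borel functions such that $\sigma_i\mu_i$ are probability measures. Set $\psi_i:=\sigma_i\circ T_{c_i}$. Then for every coupling $\eta\in\Gamma_b(\sigma_0\mu_0,\sigma_1\mu_1)$ there exists a coupling $\nu\in\Gamma_b(\psi_0|c_0'|\,\mathrm{d}s,\ \psi_1|c_1'|\,\mathrm{d}s)$ such that \[ \eta=(T_{c_0}\times T_{c_1})_\#\nu . \]
   Context: Identify $S^1$ with $\mathbb{R}/2\pi\mathbb{Z}$ (arc-length measure $\mathrm{d}s$) and with the unit circle in $\mathbb{C}$. A convex loop is a curve $c\in W^{1,1}(S^1,\mathbb{C})$ with $c'\neq0$ a.e. whose image is the boundary of a convex set in $\mathbb{C}$, positively oriented (interior to the left of $c'$ a.e.). Gauss map $T_c:=c'/|c'|:S^1\to S^1$ (defined a.e.), length measure $\mu_c:=(T_c)_\#(|c'|\,\mathrm{d}s)$. $\Gamma_b(\alpha,\beta)$ denotes the set of nonnegative measures on $S^1\times S^1$ with marginals $\alpha$ and $\beta$. *)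

theory Defs
  imports "HOL-Probability.Probability"
begin

text \<open>The parameter circle S^1 = R/2piZ, represented by the fundamental domain [0,2pi)
  with Lebesgue (arc-length) measure.\<close>
definition Dom :: "real measure" where
  "Dom = restrict_space lborel {0..<2*pi}"

definition Circ :: "complex measure" where
  "Circ = restrict_space borel (sphere 0 1)"

text \<open>A convex loop: c is 2pi-periodic, in W^{1,1} with weak derivative dc
  (c is the indefinite integral of the integrable function dc), dc is nonzero a.e.,
  the image of c is the boundary of a convex set K, and the interior of K lies
  to the left of dc a.e.\<close>
definition convex_loop :: "(real \<Rightarrow> complex) \<Rightarrow> (real \<Rightarrow> complex) \<Rightarrow> bool" where
  "convex_loop c dc \<longleftrightarrow>
     (\<forall>t. c (t + 2*pi) = c t) \<and>
     set_integrable lborel {0..2*pi} dc \<and>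
     (\<forall>t\<in>{0..2*pi}. c t = c 0 + (LINT s:{0..t}|lborel. dc s)) \<and>
     (AE s in Dom. dc s \<noteq> 0) \<and>
     (\<exists>K::complex set. convex K \<and> range c = frontier K \<and>
        (AE s in Dom. \<forall>z\<in>interior K. Im ((z - c s) * cnj (dc s)) > 0))"

text \<open>Gauss map T_c = c'/|c'| (arbitrary value 1 on the null set where c' = 0).\<close>
definition gauss :: "(real \<Rightarrow> complex) \<Rightarrow> real \<Rightarrow> complex" where
  "gauss dc s = (if dc s = 0 then 1 else sgn (dc s))"

definition arclen :: "(real \<Rightarrow> complex) \<Rightarrow> real measure" where
  "arclen dc = density Dom (\<lambda>s. ennreal (cmod (dc s)))"

definition length_measure :: "(real \<Rightarrow> complex) \<Rightarrow> complex measure" where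
  "length_measure dc = distr (arclen dc) Circ (gauss dc)"

definition couplings :: "'a measure \<Rightarrow> 'b measure \<Rightarrow> 'a measure \<Rightarrow> 'b measure
    \<Rightarrow> ('a \<times> 'b) measure set" where
  "couplings M N \<alpha> \<beta> = {\<nu>. sets \<nu> = sets (M \<Otimes>\<^sub>M N) \<and> finite_measure \<nu> \<and>
      distr \<nu> M fst = \<alpha> \<and> distr \<nu> N snd = \<beta>}"

end

theory Submission
  imports Defs
begin

text \<open>
  The measure \<open>\<sigma>\<^sub>i\<mu>\<^sub>i\<close> is the push-forward under the Gauss map \<open>T\<^sub>i\<close> of
  \<open>\<alpha>\<^sub>i = (\<sigma>\<^sub>i \<circ> T\<^sub>i) |c\<^sub>i'| ds\<close>, a finite measure on the parameter interval \<open>[0, 2\<pi>)\<close>.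
  Disintegrate \<open>\<alpha>\<^sub>i\<close> along \<open>T\<^sub>i\<close> by the conditional quantile transform: with \<open>F(y, x)\<close>
  a regular version of \<open>\<alpha>\<^sub>i(s \<le> x | T\<^sub>i s = y)\<close> and \<open>G\<^sub>i(y, u) = inf {x. u \<le> F(y, x)}\<close>,
  the pair \<open>(y, G\<^sub>i(y, u))\<close> with \<open>y \<sim> \<sigma>\<^sub>i\<mu>\<^sub>i\<close> and \<open>u\<close> uniform on \<open>(0, 1)\<close>
  has the law of \<open>(T\<^sub>i s, s)\<close> under \<open>\<alpha>\<^sub>i\<close>. Now draw \<open>(y\<^sub>0, y\<^sub>1) \<sim> \<eta>\<close> and two
  independent uniform seeds \<open>u\<^sub>0, u\<^sub>1\<close>: the law \<open>\<nu>\<close> of \<open>(G\<^sub>0(y\<^sub>0, u\<^sub>0), G\<^sub>1(y\<^sub>1, u\<^sub>1))\<close>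
  has marginals \<open>\<alpha>\<^sub>0, \<alpha>\<^sub>1\<close>, and since \<open>T\<^sub>i (G\<^sub>i(y\<^sub>i, u\<^sub>i)) = y\<^sub>i\<close> almost surely,
  its image under \<open>T\<^sub>0 \<times> T\<^sub>1\<close> is \<open>\<eta>\<close>.
\<close>

lemma AE_le_of_set_nn_integral_le:
  fixes f g :: "'a \<Rightarrow> ennreal"
  assumes [measurable]: "f \<in> borel_measurable M" "g \<in> borel_measurable M"
    and le: "\<And>E. E \<in> sets M \<Longrightarrow> (\<integral>\<^sup>+x. f x * indicator E x \<partial>M) \<le> (\<integral>\<^sup>+x. g x * indicator E x \<partial>M)"
    and fin: "\<And>E. E \<in> sets M \<Longrightarrow> (\<integral>\<^sup>+x. g x * indicator E x \<partial>M) < \<infinity>"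
  shows "AE x in M. f x \<le> g x"
proof -
  define E where "E = {x\<in>space M. g x < f x}"
  have E[measurable]: "E \<in> sets M" unfolding E_def by measurable
  have "(\<integral>\<^sup>+x. f x * indicator E x \<partial>M) = (\<integral>\<^sup>+x. g x * indicator E x + (f x - g x) * indicator E x \<partial>M)"
    by (intro nn_integral_cong) (auto simp: E_def indicator_def less_imp_le add_diff_inverse_ennreal)
  also have "\<dots> = (\<integral>\<^sup>+x. g x * indicator E x \<partial>M) + (\<integral>\<^sup>+x. (f x - g x) * indicator E x \<partial>M)"
    by (intro nn_integral_add) auto
  finally have "(\<integral>\<^sup>+x. g x * indicator E x \<partial>M) + (\<integral>\<^sup>+x. (f x - g x) * indicator E x \<partial>M)
      \<le> (\<integral>\<^sup>+x. g x * indicator E x \<partial>M) + 0"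
    using le[OF E] by simp
  then have "(\<integral>\<^sup>+x. (f x - g x) * indicator E x \<partial>M) = 0"
    using fin[OF E] by (auto simp: ennreal_add_left_cancel_le)
  then have "AE x in M. (f x - g x) * indicator E x = 0"
    by (subst (asm) nn_integral_0_iff_AE) auto
  then show ?thesis
    using AE_space by eventually_elim (auto simp: E_def indicator_def dest: ennreal_minus_eq_0)
qed

lemma exists_density_distr_restrict:
  assumes "finite_measure \<alpha>" and T[measurable]: "T \<in> measurable \<alpha> Y" and B[measurable]: "B \<in> sets \<alpha>"
  obtains g where "g \<in> borel_measurable Y"
    and "\<And>E. E \<in> sets Y \<Longrightarrow> (\<integral>\<^sup>+y. g y * indicator E y \<partial>distr \<alpha> Y T) = emeasure \<alpha> (T -` E \<inter> B)"
proof -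
  interpret \<beta>: finite_measure "distr \<alpha> Y T"
    by (rule finite_measure.finite_measure_distr[OF assms(1) T])
  define \<nu> where "\<nu> = distr (density \<alpha> (indicator B)) Y T"
  have \<nu>_eq: "emeasure \<nu> E = emeasure \<alpha> (T -` E \<inter> B)" if [measurable]: "E \<in> sets Y" for E
  proof -
    have "emeasure \<nu> E = (\<integral>\<^sup>+s. indicator B s * indicator (T -` E \<inter> space \<alpha>) s \<partial>\<alpha>)"
      unfolding \<nu>_def by (simp add: emeasure_distr emeasure_density)
    also have "\<dots> = (\<integral>\<^sup>+s. indicator (T -` E \<inter> B) s \<partial>\<alpha>)"
      using sets.sets_into_space[OF B] by (intro nn_integral_cong) (auto split: split_indicator)
    also have "\<dots> = emeasure \<alpha> (T -` E \<inter> B)"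
    proof (rule nn_integral_indicator)
      have "T -` E \<inter> B = (T -` E \<inter> space \<alpha>) \<inter> B"
        using sets.sets_into_space[OF B] by auto
      then show "T -` E \<inter> B \<in> sets \<alpha>" by simp
    qed
    finally show ?thesis .
  qed
  have "absolutely_continuous (distr \<alpha> Y T) \<nu>"
    unfolding absolutely_continuous_def
  proof
    fix N assume "N \<in> null_sets (distr \<alpha> Y T)"
    then have N[measurable]: "N \<in> sets Y" and "emeasure \<alpha> (T -` N \<inter> space \<alpha>) = 0"
      by (auto simp: null_sets_distr_iff[OF T])
    moreover have "emeasure \<alpha> (T -` N \<inter> B) \<le> emeasure \<alpha> (T -` N \<inter> space \<alpha>)"
      using sets.sets_into_space[OF B] by (intro emeasure_mono) auto
    ultimately have "emeasure \<nu> N = 0"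
      by (simp add: \<nu>_eq)
    then show "N \<in> null_sets \<nu>"
      by (simp add: null_sets_def \<nu>_def)
  qed
  then obtain g where g: "g \<in> borel_measurable (distr \<alpha> Y T)" and g_density: "density (distr \<alpha> Y T) g = \<nu>"
    using \<beta>.Radon_Nikodym[of \<nu>] by (auto simp: \<nu>_def)
  show thesis
  proof (rule that)
    show "g \<in> borel_measurable Y"
      using g by simp
    fix E assume "E \<in> sets Y"
    then have "(\<integral>\<^sup>+y. g y * indicator E y \<partial>distr \<alpha> Y T) = emeasure \<nu> E"
      using g by (simp add: g_density[symmetric] emeasure_density)
    also have "\<dots> = emeasure \<alpha> (T -` E \<inter> B)"
      using \<open>E \<in> sets Y\<close> by (rule \<nu>_eq)
    finally show "(\<integral>\<^sup>+y. g y * indicator E y \<partial>distr \<alpha> Y T) = emeasure \<alpha> (T -` E \<inter> B)" .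
  qed
qed

lemma emeasure_le_right_continuous:
  fixes h :: "'a \<Rightarrow> real"
  assumes "finite_measure \<alpha>" and [measurable]: "{s\<in>space \<alpha>. P s} \<in> sets \<alpha>" "h \<in> borel_measurable \<alpha>"
  shows "emeasure \<alpha> {s\<in>space \<alpha>. P s \<and> h s \<le> x}
    = (INF n. emeasure \<alpha> {s\<in>space \<alpha>. P s \<and> h s \<le> x + inverse (Suc n)})"
proof -
  have "(\<Inter>n. {s\<in>space \<alpha>. P s \<and> h s \<le> x + inverse (Suc n)}) = {s\<in>space \<alpha>. P s \<and> h s \<le> x}"
  proof (intro equalityI subsetI)
    fix s assume "s \<in> (\<Inter>n. {s\<in>space \<alpha>. P s \<and> h s \<le> x + inverse (Suc n)})"
    then show "s \<in> {s\<in>space \<alpha>. P s \<and> h s \<le> x}"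
      using LIMSEQ_le_const[OF LIMSEQ_inverse_real_of_nat_add[of x], of "h s"] by auto
  qed (auto intro: add_increasing2)
  moreover have "decseq (\<lambda>n. {s\<in>space \<alpha>. P s \<and> h s \<le> x + inverse (Suc n)})"
  proof (intro decseq_SucI subsetI)
    fix n
    have "inverse (real (Suc (Suc n))) \<le> inverse (Suc n)"
      by (rule le_imp_inverse_le) auto
    then show "s \<in> {s\<in>space \<alpha>. P s \<and> h s \<le> x + inverse (Suc n)}"
      if "s \<in> {s\<in>space \<alpha>. P s \<and> h s \<le> x + inverse (Suc (Suc n))}" for s
      using that by (auto intro: order_trans[OF _ add_left_mono])
  qed
  ultimately show ?thesis
    using finite_measure.emeasure_finite[OF assms(1)] by (subst INF_emeasure_decseq) auto
qed

lemma measure_eqI_Times_atMost: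
  fixes \<mu> \<nu> :: "('a \<times> real) measure"
  assumes sets_\<mu>: "sets \<mu> = sets (Y \<Otimes>\<^sub>M borel)" and sets_\<nu>: "sets \<nu> = sets (Y \<Otimes>\<^sub>M borel)"
    and "finite_measure \<mu>"
    and eq: "\<And>E x. E \<in> sets Y \<Longrightarrow> emeasure \<mu> (E \<times> {..x}) = emeasure \<nu> (E \<times> {..x})"
  shows "\<mu> = \<nu>"
proof -
  define R where "R = {E \<times> I | E I. E \<in> sets Y \<and> I \<in> range (atMost :: real \<Rightarrow> real set)}"
  have R_Pow: "R \<subseteq> Pow (space Y \<times> UNIV)"
    unfolding R_def using sets.sets_into_space by fastforce
  have "sets (Y \<Otimes>\<^sub>M borel) = sets (sigma (space Y \<times> space (borel :: real measure)) R)"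
    unfolding R_def
  proof (rule sets_pair_eq[where Ca="{space Y}" and Cb="range (\<lambda>n::nat. {..real n})"])
    show "sets (borel :: real measure) = sigma_sets (space borel) (range atMost)"
      by (subst borel_eq_atMost) (simp add: sets_measure_of)
    show "\<Union> (range (\<lambda>n::nat. {..real n})) = space borel"
      by (auto intro: real_arch_simple)
  qed (auto simp: sets.sigma_sets_eq sets.space_closed)
  then have sets_R: "sets (Y \<Otimes>\<^sub>M borel) = sigma_sets (space Y \<times> UNIV) R"
    using R_Pow by (simp add: sets_measure_of)
  have "Int_stable R"
    unfolding Int_stable_def R_def
  proof safe
    fix E E' :: "'a set" and x x' :: real
    assume "E \<in> sets Y" "E' \<in> sets Y"
    then show "\<exists>E'' I. E \<times> {..x} \<inter> E' \<times> {..x'} = E'' \<times> I \<and> E'' \<in> sets Y \<and> I \<in> range atMost"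
      by (intro exI[of _ "E \<inter> E'"] exI[of _ "{..min x x'}"]) auto
  qed
  then show ?thesis
  proof (rule measure_eqI_generator_eq[OF _ R_Pow, where A="\<lambda>n. space Y \<times> {..real n}"])
    show "emeasure \<mu> X = emeasure \<nu> X" if "X \<in> R" for X
      using that eq by (auto simp: R_def)
    show "range (\<lambda>n. space Y \<times> {..real n}) \<subseteq> R"
      by (auto simp: R_def)
    show "(\<Union>n. space Y \<times> {..real n}) = space Y \<times> UNIV"
      by (auto intro: real_arch_simple)
    show "emeasure \<mu> (space Y \<times> {..real n}) \<noteq> \<infinity>" for n
      using finite_measure.emeasure_finite[OF \<open>finite_measure \<mu>\<close>] by simp
  qed (simp_all add: sets_\<mu> sets_\<nu> sets_R)
qed

lemma distr_pair_snd_prob_space: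
  assumes "prob_space M" and "sigma_finite_measure N"
  shows "distr (M \<Otimes>\<^sub>M N) N snd = N"
proof -
  interpret M: prob_space M by fact
  interpret N: sigma_finite_measure N by fact
  show ?thesis
  proof (rule measure_eqI)
    fix A assume A: "A \<in> sets (distr (M \<Otimes>\<^sub>M N) N snd)"
    then have "snd -` A \<inter> space (M \<Otimes>\<^sub>M N) = space M \<times> A"
      using sets.sets_into_space by (auto simp: space_pair_measure)
    moreover have "emeasure (M \<Otimes>\<^sub>M N) (space M \<times> A) = emeasure M (space M) * emeasure N A"
      using A by (intro N.emeasure_pair_measure_Times) auto
    ultimately show "emeasure (distr (M \<Otimes>\<^sub>M N) N snd) A = emeasure N A"
      using A by (simp add: emeasure_distr M.emeasure_space_1)
  qed simp
qed

lemma distr_AE_eq_fst: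
  assumes "prob_space P" and f: "f \<in> measurable (M \<Otimes>\<^sub>M P) N" and "sets N = sets M"
    and "AE w in M \<Otimes>\<^sub>M P. f w = fst w"
  shows "distr (M \<Otimes>\<^sub>M P) N f = M"
proof -
  have "distr (M \<Otimes>\<^sub>M P) N f = distr (M \<Otimes>\<^sub>M P) M fst"
    using assms by (intro distr_cong_AE) simp_all
  also have "\<dots> = M"
    by (rule prob_space.distr_pair_fst[OF assms(1)])
  finally show ?thesis .
qed

section \<open>Distribution functions and quantiles\<close>

definition bounded_cdf :: "real \<Rightarrow> real \<Rightarrow> (real \<Rightarrow> ennreal) \<Rightarrow> bool" where
  "bounded_cdf a b F \<longleftrightarrow> mono F \<and> (\<forall>x c. (\<forall>x'>x. c \<le> F x') \<longrightarrow> c \<le> F x) \<and>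
     (\<forall>x<a. F x = 0) \<and> (\<forall>x\<ge>b. F x = 1)"

lemma bounded_cdf_le_1: "bounded_cdf a b F \<Longrightarrow> F x \<le> 1"
  unfolding bounded_cdf_def by (metis mono_def nle_le order_refl)

definition quantile :: "(real \<Rightarrow> ennreal) \<Rightarrow> real \<Rightarrow> real" where
  "quantile F u = Inf {x. ennreal u \<le> F x}"

lemma quantile_le_iff:
  assumes F: "bounded_cdf a b F" and u: "0 < u" "u \<le> 1"
  shows "quantile F u \<le> t \<longleftrightarrow> ennreal u \<le> F t"
proof -
  define S where "S = {x. ennreal u \<le> F x}"
  have mono: "F x \<le> F x'" if "x \<le> x'" for x x'
    using F that by (auto simp: bounded_cdf_def mono_def)
  have right_cont: "c \<le> F x" if "\<And>x'. x < x' \<Longrightarrow> c \<le> F x'" for c x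
    using F that unfolding bounded_cdf_def by blast
  have "b \<in> S"
    using F u by (simp add: S_def bounded_cdf_def)
  then have ne: "S \<noteq> {}" by auto
  have bdd: "bdd_below S"
  proof (rule bdd_belowI)
    fix x assume "x \<in> S"
    then have "F x \<noteq> 0" using u by (auto simp: S_def)
    then show "a \<le> x" using F by (auto simp: bounded_cdf_def not_le[symmetric])
  qed
  have "ennreal u \<le> F (Inf S)"
  proof (rule right_cont)
    fix x' assume "Inf S < x'"
    then obtain s where "s \<in> S" "s < x'" using cInf_less_iff[OF ne bdd] by blast
    then show "ennreal u \<le> F x'" using mono[of s x'] by (simp add: S_def)
  qed
  then show ?thesis
    using mono[of "Inf S" t] cInf_lower[OF _ bdd, of t] by (auto simp: S_def quantile_def)
qed

lemma bounded_cdf_INF_rat: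
  fixes f :: "rat \<Rightarrow> ennreal"
  assumes le_1: "\<And>r. f r \<le> 1"
    and below: "\<And>r. of_rat r < a \<Longrightarrow> f r = 0" and above: "\<And>r. b \<le> of_rat r \<Longrightarrow> 1 \<le> f r"
  shows "bounded_cdf a b (\<lambda>x. INF r\<in>{r. x < of_rat r}. f r)"
  unfolding bounded_cdf_def
proof (intro conjI allI impI)
  show "mono (\<lambda>x. INF r\<in>{r. x < of_rat r}. f r)"
    by (intro monoI INF_superset_mono) auto
next
  fix x :: real and c assume right: "\<forall>x'>x. c \<le> (INF r\<in>{r. x' < of_rat r}. f r)"
  show "c \<le> (INF r\<in>{r. x < of_rat r}. f r)"
  proof (rule INF_greatest)
    fix r assume "r \<in> {r. x < of_rat r}"
    then obtain x' :: real where "x < x'" "x' < of_rat r" using dense by blast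
    then have "c \<le> (INF r\<in>{r. x' < of_rat r}. f r)" "(INF r\<in>{r. x' < of_rat r}. f r) \<le> f r"
      using right by (auto intro: INF_lower)
    then show "c \<le> f r" by (rule order_trans)
  qed
next
  fix x :: real assume "x < a"
  then obtain r where "x < of_rat r" "of_rat r < a" using of_rat_dense by blast
  then show "(INF r\<in>{r. x < of_rat r}. f r) = 0"
    using below by (metis (mono_tags) INF_lower mem_Collect_eq le_zero_eq)
next
  fix x :: real assume "b \<le> x"
  obtain r where "x < of_rat r" using of_rat_dense[of x "x + 1"] by auto
  then have "(INF r\<in>{r. x < of_rat r}. f r) \<le> 1"
    using le_1 by (auto intro: INF_lower2)
  moreover have "1 \<le> (INF r\<in>{r. x < of_rat r}. f r)"
    using \<open>b \<le> x\<close> above by (auto intro!: INF_greatest)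
  ultimately show "(INF r\<in>{r. x < of_rat r}. f r) = 1" by simp
qed

abbreviation unit_interval :: "real measure" where
  "unit_interval \<equiv> restrict_space lborel {0<..<1}"

lemma prob_space_unit_interval: "prob_space unit_interval"
  by (rule prob_space_restrict_space) auto

lemma emeasure_unit_interval_le:
  fixes c :: ennreal
  assumes "c \<le> 1"
  shows "emeasure unit_interval {u\<in>{0<..<1}. ennreal u \<le> c} = c"
proof -
  obtain r where r: "c = ennreal r" "0 \<le> r" "r \<le> 1"
    using assms by (cases c) (auto simp: ennreal_le_1 top_unique)
  then have "{u\<in>{0<..<1}. ennreal u \<le> c} = (if r < 1 then {0<..r} else {0<..<1})"
    by (auto simp: ennreal_le_iff)
  then show ?thesis
    using r by (simp add: emeasure_restrict_space subset_eq)
qed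

lemma emeasure_quantile_le:
  assumes "bounded_cdf a b F"
  shows "emeasure unit_interval {u\<in>{0<..<1}. quantile F u \<le> x} = F x"
proof -
  have "{u\<in>{0<..<1}. quantile F u \<le> x} = {u\<in>{0<..<1}. ennreal u \<le> F x}"
    using quantile_le_iff[OF assms] by auto
  then show ?thesis
    using emeasure_unit_interval_le[OF bounded_cdf_le_1[OF assms]] by simp
qed

lemma measurable_quantile:
  assumes [measurable]: "\<And>x. (\<lambda>y. F y x) \<in> borel_measurable Y" and F: "\<And>y. bounded_cdf a b (F y)"
  shows "(\<lambda>w. quantile (F (fst w)) (snd w)) \<in> borel_measurable (Y \<Otimes>\<^sub>M unit_interval)"
  unfolding borel_measurable_iff_le
proof
  fix x
  have [measurable]: "(\<lambda>u. u) \<in> borel_measurable unit_interval"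
    by (rule measurable_restrict_space1) simp
  have "{w \<in> space (Y \<Otimes>\<^sub>M unit_interval). quantile (F (fst w)) (snd w) \<le> x}
      = {w \<in> space (Y \<Otimes>\<^sub>M unit_interval). ennreal (snd w) \<le> F (fst w) x}"
    using quantile_le_iff[OF F] by (auto simp: space_pair_measure)
  also have "\<dots> \<in> sets (Y \<Otimes>\<^sub>M unit_interval)"
    by measurable
  finally show "{w \<in> space (Y \<Otimes>\<^sub>M unit_interval). quantile (F (fst w)) (snd w) \<le> x}
      \<in> sets (Y \<Otimes>\<^sub>M unit_interval)" .
qed

section \<open>Regular conditional distribution functions\<close>

text \<open>\<open>f x\<close> is a version of the conditional probability \<open>\<alpha>(s \<le> x | T)\<close>, chosen separately
  for each level \<open>x\<close>; hence its properties below hold only almost everywhere.\<close>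
lemma conditional_cdf_levels:
  fixes \<alpha> :: "real measure"
  assumes \<alpha>: "finite_measure \<alpha>" and [measurable]: "(\<lambda>s. s) \<in> borel_measurable \<alpha>"
    and T[measurable]: "T \<in> measurable \<alpha> Y"
  obtains f where "\<And>x. f x \<in> borel_measurable Y"
    and "\<And>E x. E \<in> sets Y \<Longrightarrow>
      (\<integral>\<^sup>+y. f x y * indicator E y \<partial>distr \<alpha> Y T) = emeasure \<alpha> {s\<in>space \<alpha>. T s \<in> E \<and> s \<le> x}"
proof -
  have "\<exists>g. g \<in> borel_measurable Y \<and> (\<forall>E\<in>sets Y.
      (\<integral>\<^sup>+y. g y * indicator E y \<partial>distr \<alpha> Y T) = emeasure \<alpha> {s\<in>space \<alpha>. T s \<in> E \<and> s \<le> x})" for x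
  proof -
    have "{s\<in>space \<alpha>. s \<le> x} \<in> sets \<alpha>"
      by measurable
    then obtain g where "g \<in> borel_measurable Y" and "\<And>E. E \<in> sets Y \<Longrightarrow>
        (\<integral>\<^sup>+y. g y * indicator E y \<partial>distr \<alpha> Y T) = emeasure \<alpha> (T -` E \<inter> {s\<in>space \<alpha>. s \<le> x})"
      using exists_density_distr_restrict[OF \<alpha> T] by blast
    moreover have "T -` E \<inter> {s\<in>space \<alpha>. s \<le> x} = {s\<in>space \<alpha>. T s \<in> E \<and> s \<le> x}" for E
      by auto
    ultimately show ?thesis by auto
  qed
  then have "\<exists>f. \<forall>x. f x \<in> borel_measurable Y \<and> (\<forall>E\<in>sets Y.
      (\<integral>\<^sup>+y. f x y * indicator E y \<partial>distr \<alpha> Y T) = emeasure \<alpha> {s\<in>space \<alpha>. T s \<in> E \<and> s \<le> x})"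
    by (intro choice allI)
  then show thesis
    using that by blast
qed

lemma conditional_cdf_level_properties:
  fixes \<alpha> :: "real measure"
  assumes \<alpha>: "finite_measure \<alpha>" and [measurable]: "(\<lambda>s. s) \<in> borel_measurable \<alpha>"
    and T[measurable]: "T \<in> measurable \<alpha> Y" and support: "AE s in \<alpha>. a \<le> s \<and> s \<le> b"
    and [measurable]: "\<And>x. f x \<in> borel_measurable Y"
    and f_int: "\<And>E x. E \<in> sets Y \<Longrightarrow>
      (\<integral>\<^sup>+y. f x y * indicator E y \<partial>distr \<alpha> Y T) = emeasure \<alpha> {s\<in>space \<alpha>. T s \<in> E \<and> s \<le> x}"
  shows "x \<le> x' \<Longrightarrow> AE y in distr \<alpha> Y T. f x y \<le> f x' y"
    and "AE y in distr \<alpha> Y T. f x y \<le> 1"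
    and "x < a \<Longrightarrow> AE y in distr \<alpha> Y T. f x y \<le> 0"
    and "b \<le> x \<Longrightarrow> AE y in distr \<alpha> Y T. 1 \<le> f x y"
proof -
  interpret \<alpha>: finite_measure \<alpha> by (rule \<alpha>)
  define \<beta> where "\<beta> = distr \<alpha> Y T"
  have sets_\<beta>[measurable_cong]: "sets \<beta> = sets Y" by (simp add: \<beta>_def)
  define A where "A E x = {s\<in>space \<alpha>. T s \<in> E \<and> s \<le> x}" for E x
  have A_sets[measurable]: "A E x \<in> sets \<alpha>" if [measurable]: "E \<in> sets Y" for E x
    unfolding A_def by measurable
  have f_int': "(\<integral>\<^sup>+y. f x y * indicator E y \<partial>\<beta>) = emeasure \<alpha> (A E x)" if "E \<in> sets \<beta>" for E x
    using f_int that by (simp add: \<beta>_def A_def)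
  have emeasure_\<beta>: "emeasure \<beta> E = emeasure \<alpha> (T -` E \<inter> space \<alpha>)" if "E \<in> sets \<beta>" for E
    using that by (simp add: \<beta>_def emeasure_distr)
  show "AE y in distr \<alpha> Y T. f x y \<le> f x' y" if "x \<le> x'"
    unfolding \<beta>_def[symmetric] using that
    by (intro AE_le_of_set_nn_integral_le) (auto simp: f_int' A_def less_top[symmetric] intro!: emeasure_mono)
  show "AE y in distr \<alpha> Y T. f x y \<le> 1"
    unfolding \<beta>_def[symmetric]
    by (intro AE_le_of_set_nn_integral_le)
      (auto simp: f_int' emeasure_\<beta> A_def less_top[symmetric] intro!: emeasure_mono)
  show "AE y in distr \<alpha> Y T. f x y \<le> 0" if "x < a"
    unfolding \<beta>_def[symmetric]
  proof (intro AE_le_of_set_nn_integral_le)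
    fix E assume "E \<in> sets \<beta>"
    moreover have "emeasure \<alpha> (A E x) = 0"
      unfolding A_def using support \<open>x < a\<close> by (intro emeasure_eq_0_AE) (auto elim: eventually_mono)
    ultimately show "(\<integral>\<^sup>+y. f x y * indicator E y \<partial>\<beta>) \<le> (\<integral>\<^sup>+y. 0 * indicator E y \<partial>\<beta>)"
      by (simp add: f_int')
  qed auto
  show "AE y in distr \<alpha> Y T. 1 \<le> f x y" if "b \<le> x"
    unfolding \<beta>_def[symmetric]
  proof (intro AE_le_of_set_nn_integral_le)
    fix E assume E: "E \<in> sets \<beta>"
    have "AE s in \<alpha>. s \<in> A E x \<longleftrightarrow> s \<in> T -` E \<inter> space \<alpha>"
      using support AE_space by eventually_elim (use \<open>b \<le> x\<close> in \<open>auto simp: A_def\<close>)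
    then have "emeasure \<alpha> (A E x) = emeasure \<alpha> (T -` E \<inter> space \<alpha>)"
      using E by (intro emeasure_eq_AE) (auto simp: sets_\<beta>)
    then show "(\<integral>\<^sup>+y. 1 * indicator E y \<partial>\<beta>) \<le> (\<integral>\<^sup>+y. f x y * indicator E y \<partial>\<beta>)"
      using E by (simp add: f_int' emeasure_\<beta>)
  qed (auto simp: f_int' less_top[symmetric])
qed

lemma set_nn_integral_INF_rat_levels:
  fixes \<alpha> :: "real measure"
  assumes \<alpha>: "finite_measure \<alpha>" and [measurable]: "(\<lambda>s. s) \<in> borel_measurable \<alpha>"
    and [measurable]: "T \<in> measurable \<alpha> Y" "E \<in> sets Y"
    and f_int: "\<And>x. (\<integral>\<^sup>+y. f x y * indicator E y \<partial>distr \<alpha> Y T) = emeasure \<alpha> {s\<in>space \<alpha>. T s \<in> E \<and> s \<le> x}"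
    and f_mono: "\<And>x x'. x \<le> x' \<Longrightarrow> AE y in distr \<alpha> Y T. f x y \<le> f x' y"
    and F: "AE y in distr \<alpha> Y T. \<forall>x. F y x = (INF r\<in>{r. x < of_rat r}. f (of_rat r) y)"
  shows "(\<integral>\<^sup>+y. F y x * indicator E y \<partial>distr \<alpha> Y T) = emeasure \<alpha> {s\<in>space \<alpha>. T s \<in> E \<and> s \<le> x}"
proof (rule antisym)
  define A where "A x = {s\<in>space \<alpha>. T s \<in> E \<and> s \<le> x}" for x
  have "(\<integral>\<^sup>+y. F y x * indicator E y \<partial>distr \<alpha> Y T) \<le> emeasure \<alpha> (A (x + inverse (Suc n)))" for n
  proof -
    obtain r where r: "x < of_rat r" "of_rat r < x + inverse (Suc n)"
      using of_rat_dense[of x "x + inverse (Suc n)"] by auto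
    have "AE y in distr \<alpha> Y T. F y x \<le> f (of_rat r) y"
      using F by eventually_elim (use r in \<open>auto intro: INF_lower\<close>)
    then have "(\<integral>\<^sup>+y. F y x * indicator E y \<partial>distr \<alpha> Y T) \<le> (\<integral>\<^sup>+y. f (of_rat r) y * indicator E y \<partial>distr \<alpha> Y T)"
      by (intro nn_integral_mono_AE) (auto elim!: eventually_mono intro: mult_right_mono)
    also have "\<dots> \<le> emeasure \<alpha> (A (x + inverse (Suc n)))"
      using r by (auto simp: f_int A_def intro!: emeasure_mono)
    finally show ?thesis .
  qed
  then have "(\<integral>\<^sup>+y. F y x * indicator E y \<partial>distr \<alpha> Y T) \<le> (INF n. emeasure \<alpha> (A (x + inverse (Suc n))))"
    by (rule INF_greatest)
  also have "\<dots> = emeasure \<alpha> (A x)"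
    unfolding A_def using \<alpha> by (intro emeasure_le_right_continuous[symmetric]) auto
  finally show "(\<integral>\<^sup>+y. F y x * indicator E y \<partial>distr \<alpha> Y T) \<le> emeasure \<alpha> {s\<in>space \<alpha>. T s \<in> E \<and> s \<le> x}"
    by (simp add: A_def)
next
  have "AE y in distr \<alpha> Y T. \<forall>r. x < of_rat r \<longrightarrow> f x y \<le> f (of_rat r) y"
    unfolding AE_all_countable using f_mono by (auto intro: AE_I2)
  then have "AE y in distr \<alpha> Y T. f x y \<le> F y x"
    using F by eventually_elim (auto intro: INF_greatest)
  then have "(\<integral>\<^sup>+y. f x y * indicator E y \<partial>distr \<alpha> Y T) \<le> (\<integral>\<^sup>+y. F y x * indicator E y \<partial>distr \<alpha> Y T)"
    by (intro nn_integral_mono_AE) (auto elim!: eventually_mono intro: mult_right_mono)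
  then show "emeasure \<alpha> {s\<in>space \<alpha>. T s \<in> E \<and> s \<le> x} \<le> (\<integral>\<^sup>+y. F y x * indicator E y \<partial>distr \<alpha> Y T)"
    by (simp add: f_int)
qed

text \<open>Regularisation: restrict \<open>f\<close> to rational levels, replace it by the distribution function
  of the point mass at \<open>b\<close> off the full-measure set where the countably many a.e. properties hold,
  and take right limits.\<close>
lemma conditional_cdf:
  fixes \<alpha> :: "real measure"
  assumes \<alpha>: "finite_measure \<alpha>" and id[measurable]: "(\<lambda>s. s) \<in> borel_measurable \<alpha>"
    and T[measurable]: "T \<in> measurable \<alpha> Y" and "a \<le> b" and support: "AE s in \<alpha>. a \<le> s \<and> s \<le> b"
  obtains F where "\<And>x. (\<lambda>y. F y x) \<in> borel_measurable Y" and "\<And>y. bounded_cdf a b (F y)"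
    and "\<And>E x. E \<in> sets Y \<Longrightarrow>
      (\<integral>\<^sup>+y. F y x * indicator E y \<partial>distr \<alpha> Y T) = emeasure \<alpha> {s\<in>space \<alpha>. T s \<in> E \<and> s \<le> x}"
proof -
  define \<beta> where "\<beta> = distr \<alpha> Y T"
  obtain f where f_meas[measurable]: "\<And>x. f x \<in> borel_measurable Y"
    and f_int: "\<And>E x. E \<in> sets Y \<Longrightarrow>
      (\<integral>\<^sup>+y. f x y * indicator E y \<partial>\<beta>) = emeasure \<alpha> {s\<in>space \<alpha>. T s \<in> E \<and> s \<le> x}"
    using conditional_cdf_levels[OF \<alpha> id T] unfolding \<beta>_def by blast
  note f_props = conditional_cdf_level_properties[OF \<alpha> id T support f_meas f_int[unfolded \<beta>_def], folded \<beta>_def]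
  note f_mono = f_props(1) and f_le_1 = f_props(2) and f_below = f_props(3) and f_above = f_props(4)
  define Good where "Good = {y\<in>space Y. \<forall>r. f (of_rat r) y \<le> 1 \<and>
    (of_rat r < a \<longrightarrow> f (of_rat r) y = 0) \<and> (b \<le> of_rat r \<longrightarrow> 1 \<le> f (of_rat r) y)}"
  have Good_sets[measurable]: "Good \<in> sets Y"
    unfolding Good_def by measurable
  have "AE y in \<beta>. f (of_rat r) y \<le> 1 \<and> (of_rat r < a \<longrightarrow> f (of_rat r) y = 0) \<and>
      (b \<le> of_rat r \<longrightarrow> 1 \<le> f (of_rat r) y)" for r
    using f_le_1[of "of_rat r"] f_below[of "of_rat r"] f_above[of "of_rat r"]
    by (cases "of_rat r < a"; cases "b \<le> of_rat r") (auto elim: eventually_mono)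
  then have "AE y in \<beta>. \<forall>r. f (of_rat r) y \<le> 1 \<and> (of_rat r < a \<longrightarrow> f (of_rat r) y = 0) \<and>
      (b \<le> of_rat r \<longrightarrow> 1 \<le> f (of_rat r) y)"
    unfolding AE_all_countable ..
  then have AE_Good: "AE y in \<beta>. y \<in> Good"
    using AE_space by eventually_elim (simp add: Good_def \<beta>_def)
  define g where "g y r = (if y \<in> Good then f (of_rat r) y else indicator {b..} (of_rat r))" for y r
  define F where "F y (x::real) = (INF r\<in>{r. x < of_rat r}. g y r)" for y x
  show thesis
  proof
    show "(\<lambda>y. F y x) \<in> borel_measurable Y" for x
      unfolding F_def g_def by measurable
    show "bounded_cdf a b (F y)" for y
      unfolding F_def using \<open>a \<le> b\<close>
      by (intro bounded_cdf_INF_rat) (simp_all add: g_def Good_def indicator_def)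
    have "AE y in \<beta>. \<forall>x. F y x = (INF r\<in>{r. x < of_rat r}. f (of_rat r) y)"
      using AE_Good by eventually_elim (simp add: F_def g_def)
    then show "(\<integral>\<^sup>+y. F y x * indicator E y \<partial>distr \<alpha> Y T) = emeasure \<alpha> {s\<in>space \<alpha>. T s \<in> E \<and> s \<le> x}"
      if "E \<in> sets Y" for E x
      using that f_int f_mono unfolding \<beta>_def by (intro set_nn_integral_INF_rat_levels[OF \<alpha> id T])
  qed
qed

section \<open>Disintegration and gluing\<close>

text \<open>\<open>G (y, \<cdot>)\<close> is the quantile function of \<open>F y\<close>, so it maps the uniform law on \<open>(0, 1)\<close>
  to the conditional law of \<open>s\<close> given \<open>T s = y\<close>.\<close>
lemma quantile_disintegration:
  fixes \<alpha> :: "real measure"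
  assumes \<alpha>: "finite_measure \<alpha>" and id[measurable]: "(\<lambda>s. s) \<in> borel_measurable \<alpha>"
    and T[measurable]: "T \<in> measurable \<alpha> Y" and "a \<le> b" and support: "AE s in \<alpha>. a \<le> s \<and> s \<le> b"
  obtains G where "G \<in> borel_measurable (Y \<Otimes>\<^sub>M unit_interval)"
    and "distr (distr \<alpha> Y T \<Otimes>\<^sub>M unit_interval) (Y \<Otimes>\<^sub>M borel) (\<lambda>w. (fst w, G w))
      = distr \<alpha> (Y \<Otimes>\<^sub>M borel) (\<lambda>s. (T s, s))"
proof -
  interpret \<alpha>: finite_measure \<alpha> by (rule \<alpha>)
  define \<beta> where "\<beta> = distr \<alpha> Y T"
  interpret \<beta>: finite_measure \<beta> unfolding \<beta>_def by (rule \<alpha>.finite_measure_distr[OF T])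
  interpret U: prob_space unit_interval by (rule prob_space_unit_interval)
  have sets_\<beta>[measurable_cong]: "sets \<beta> = sets Y" by (simp add: \<beta>_def)
  obtain F where [measurable]: "\<And>x. (\<lambda>y. F y x) \<in> borel_measurable Y"
    and F_cdf: "\<And>y. bounded_cdf a b (F y)"
    and F_int: "\<And>E x. E \<in> sets Y \<Longrightarrow>
      (\<integral>\<^sup>+y. F y x * indicator E y \<partial>\<beta>) = emeasure \<alpha> {s\<in>space \<alpha>. T s \<in> E \<and> s \<le> x}"
    using conditional_cdf[OF \<alpha> id T \<open>a \<le> b\<close> support] unfolding \<beta>_def by blast
  define G where "G w = quantile (F (fst w)) (snd w)" for w
  have G_meas[measurable]: "G \<in> borel_measurable (Y \<Otimes>\<^sub>M unit_interval)"
    unfolding G_def by (rule measurable_quantile[OF _ F_cdf]) measurable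
  have sets_\<beta>U[measurable_cong]: "sets (\<beta> \<Otimes>\<^sub>M unit_interval) = sets (Y \<Otimes>\<^sub>M unit_interval)"
    by (rule sets_pair_measure_cong[OF sets_\<beta> refl])
  show thesis
  proof (rule that[OF G_meas], unfold \<beta>_def[symmetric], rule measure_eqI_Times_atMost)
    show "finite_measure (distr (\<beta> \<Otimes>\<^sub>M unit_interval) (Y \<Otimes>\<^sub>M borel) (\<lambda>w. (fst w, G w)))"
      by (intro finite_measure.finite_measure_distr finite_measure_pair_measure)
        (auto simp: \<beta>.finite_measure_axioms U.finite_measure_axioms)
    fix E x assume E[measurable]: "E \<in> sets Y"
    define Z where "Z = {w \<in> space (\<beta> \<Otimes>\<^sub>M unit_interval). fst w \<in> E \<and> G w \<le> x}"
    have "emeasure (distr (\<beta> \<Otimes>\<^sub>M unit_interval) (Y \<Otimes>\<^sub>M borel) (\<lambda>w. (fst w, G w))) (E \<times> {..x})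
        = emeasure (\<beta> \<Otimes>\<^sub>M unit_interval) Z"
      by (subst emeasure_distr) (auto simp: Z_def intro!: arg_cong[where f="emeasure _"])
    also have "\<dots> = (\<integral>\<^sup>+y. emeasure unit_interval (Pair y -` Z) \<partial>\<beta>)"
      by (rule U.emeasure_pair_measure_alt) (simp add: Z_def)
    also have "\<dots> = (\<integral>\<^sup>+y. F y x * indicator E y \<partial>\<beta>)"
    proof (rule nn_integral_cong)
      fix y assume "y \<in> space \<beta>"
      then have "y \<in> space Y" by (simp add: \<beta>_def)
      then have "Pair y -` Z = (if y \<in> E then {u\<in>{0<..<1}. quantile (F y) u \<le> x} else {})"
        using \<open>y \<in> space \<beta>\<close> by (auto simp: Z_def G_def space_pair_measure)
      then show "emeasure unit_interval (Pair y -` Z) = F y x * indicator E y"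
        using emeasure_quantile_le[OF F_cdf] by simp
    qed
    also have "\<dots> = emeasure (distr \<alpha> (Y \<Otimes>\<^sub>M borel) (\<lambda>s. (T s, s))) (E \<times> {..x})"
      by (subst emeasure_distr) (auto simp: F_int intro!: arg_cong[where f="emeasure _"])
    finally show "emeasure (distr (\<beta> \<Otimes>\<^sub>M unit_interval) (Y \<Otimes>\<^sub>M borel) (\<lambda>w. (fst w, G w))) (E \<times> {..x})
        = emeasure (distr \<alpha> (Y \<Otimes>\<^sub>M borel) (\<lambda>s. (T s, s))) (E \<times> {..x})" .
  qed simp_all
qed

lemma conditional_sampler:
  fixes \<alpha> :: "real measure" and T :: "real \<Rightarrow> 'b::{second_countable_topology, t2_space}"
  assumes \<alpha>: "finite_measure \<alpha>" and sets_\<alpha>: "sets \<alpha> = sets (restrict_space borel S)"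
    and S: "S \<in> sets borel" "s0 \<in> S" "S \<subseteq> {a..b}"
    and T[measurable]: "T \<in> measurable \<alpha> Y" and Y_borel[measurable]: "(\<lambda>y. y) \<in> borel_measurable Y"
  obtains G where "G \<in> measurable (Y \<Otimes>\<^sub>M unit_interval) \<alpha>"
    and "distr (distr \<alpha> Y T \<Otimes>\<^sub>M unit_interval) \<alpha> G = \<alpha>"
    and "AE w in distr \<alpha> Y T \<Otimes>\<^sub>M unit_interval. T (G w) = fst w"
proof -
  define \<beta> where "\<beta> = distr \<alpha> Y T"
  have space_\<alpha>: "space \<alpha> = S"
    using sets_eq_imp_space_eq[OF sets_\<alpha>] by (simp add: space_restrict_space)
  have id[measurable]: "(\<lambda>s. s) \<in> borel_measurable \<alpha>"
    by (subst measurable_cong_sets[OF sets_\<alpha> refl]) (rule measurable_restrict_space1, simp)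
  have support: "AE s in \<alpha>. a \<le> s \<and> s \<le> b"
    using S(3) by (intro AE_I2) (auto simp: space_\<alpha>)
  have "a \<le> b"
    using S(2,3) by auto
  obtain G' where [measurable]: "G' \<in> borel_measurable (Y \<Otimes>\<^sub>M unit_interval)"
    and G'_eq: "distr (\<beta> \<Otimes>\<^sub>M unit_interval) (Y \<Otimes>\<^sub>M borel) (\<lambda>w. (fst w, G' w))
      = distr \<alpha> (Y \<Otimes>\<^sub>M borel) (\<lambda>s. (T s, s))"
    using quantile_disintegration[OF \<alpha> id T \<open>a \<le> b\<close> support] unfolding \<beta>_def by blast
  \<comment> \<open>\<open>G'\<close> takes values in \<open>S\<close> only almost surely, so it is composed with a retraction onto \<open>S\<close>.\<close>
  define cl where "cl s = (if s \<in> S then s else s0)" for s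
  have cl[measurable]: "cl \<in> measurable borel \<alpha>"
    unfolding measurable_cong_sets[OF refl sets_\<alpha>]
  proof (rule measurable_restrict_space2)
    show "cl \<in> borel_measurable borel"
      unfolding cl_def using S(1) by measurable
  qed (use S in \<open>auto simp: cl_def\<close>)
  have sets_\<beta>U[measurable_cong]: "sets (\<beta> \<Otimes>\<^sub>M unit_interval) = sets (Y \<Otimes>\<^sub>M unit_interval)"
    by (rule sets_pair_measure_cong) (simp_all add: \<beta>_def)
  show thesis
  proof (rule that[of "cl \<circ> G'", folded \<beta>_def])
    show "cl \<circ> G' \<in> measurable (Y \<Otimes>\<^sub>M unit_interval) \<alpha>"
      by measurable
    have "distr (\<beta> \<Otimes>\<^sub>M unit_interval) \<alpha> (cl \<circ> G')
        = distr (distr (\<beta> \<Otimes>\<^sub>M unit_interval) (Y \<Otimes>\<^sub>M borel) (\<lambda>w. (fst w, G' w))) \<alpha> (cl \<circ> snd)"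
      by (subst distr_distr) (auto simp: comp_def)
    also have "\<dots> = distr \<alpha> \<alpha> cl"
      unfolding G'_eq by (subst distr_distr) (auto simp: comp_def)
    also have "\<dots> = \<alpha>"
      by (subst distr_cong[where g="\<lambda>s. s"]) (auto simp: cl_def space_\<alpha> distr_id2)
    finally show "distr (\<beta> \<Otimes>\<^sub>M unit_interval) \<alpha> (cl \<circ> G') = \<alpha>" .
    have graph: "{x \<in> space (Y \<Otimes>\<^sub>M borel). T (cl (snd x)) = fst x} \<in> sets (Y \<Otimes>\<^sub>M borel)"
    proof (rule measurable_equality_set)
      show "(\<lambda>x. T (cl (snd x))) \<in> borel_measurable (Y \<Otimes>\<^sub>M borel)"
        using measurable_compose[OF measurable_compose[OF cl T] Y_borel] by simp
      show "fst \<in> borel_measurable (Y \<Otimes>\<^sub>M borel)"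
        using measurable_compose[OF measurable_fst Y_borel] by simp
    qed
    have TS: "(\<lambda>s. (T s, s)) \<in> measurable \<alpha> (Y \<Otimes>\<^sub>M borel)"
      by measurable
    have "AE x in distr \<alpha> (Y \<Otimes>\<^sub>M borel) (\<lambda>s. (T s, s)). T (cl (snd x)) = fst x"
      unfolding AE_distr_iff[OF TS graph] by (rule AE_I2) (simp add: cl_def space_\<alpha>)
    then have "AE x in distr (\<beta> \<Otimes>\<^sub>M unit_interval) (Y \<Otimes>\<^sub>M borel) (\<lambda>w. (fst w, G' w)).
        T (cl (snd x)) = fst x"
      by (simp only: G'_eq)
    from AE_distrD[OF _ this] show "AE w in \<beta> \<Otimes>\<^sub>M unit_interval. T ((cl \<circ> G') w) = fst w"
      by simp
  qed
qed

lemma distr_pair_measure_seeds: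
  assumes "finite_measure \<eta>" and "sets \<eta> = sets (Y0 \<Otimes>\<^sub>M Y1)" and P: "prob_space P"
  shows "distr (\<eta> \<Otimes>\<^sub>M (P \<Otimes>\<^sub>M P)) (Y0 \<Otimes>\<^sub>M P) (\<lambda>w. (fst (fst w), fst (snd w))) = distr \<eta> Y0 fst \<Otimes>\<^sub>M P"
    and "distr (\<eta> \<Otimes>\<^sub>M (P \<Otimes>\<^sub>M P)) (Y1 \<Otimes>\<^sub>M P) (\<lambda>w. (snd (fst w), snd (snd w))) = distr \<eta> Y1 snd \<Otimes>\<^sub>M P"
proof -
  interpret P: prob_space P by (rule P)
  have [measurable]: "fst \<in> measurable \<eta> Y0" "snd \<in> measurable \<eta> Y1"
    by (simp_all add: measurable_cong_sets[OF assms(2) refl])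
  show "distr (\<eta> \<Otimes>\<^sub>M (P \<Otimes>\<^sub>M P)) (Y0 \<Otimes>\<^sub>M P) (\<lambda>w. (fst (fst w), fst (snd w))) = distr \<eta> Y0 fst \<Otimes>\<^sub>M P"
    using pair_measure_distr[of fst \<eta> Y0 fst "P \<Otimes>\<^sub>M P" P] P.distr_pair_fst[of P] P.sigma_finite_measure_axioms
    by (simp add: split_beta')
  show "distr (\<eta> \<Otimes>\<^sub>M (P \<Otimes>\<^sub>M P)) (Y1 \<Otimes>\<^sub>M P) (\<lambda>w. (snd (fst w), snd (snd w))) = distr \<eta> Y1 snd \<Otimes>\<^sub>M P"
    using pair_measure_distr[of snd \<eta> Y1 snd "P \<Otimes>\<^sub>M P" P]
      distr_pair_snd_prob_space[OF P P.sigma_finite_measure_axioms] P.sigma_finite_measure_axioms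
    by (simp add: split_beta')
qed

lemma couplings_lift:
  fixes \<eta> :: "('a \<times> 'b) measure" and P :: "'c measure"
  assumes \<eta>: "\<eta> \<in> couplings Y0 Y1 \<beta>0 \<beta>1" and P: "prob_space P"
    and G0: "G0 \<in> measurable (Y0 \<Otimes>\<^sub>M P) X0" "distr (\<beta>0 \<Otimes>\<^sub>M P) X0 G0 = \<alpha>0"
      "AE w in \<beta>0 \<Otimes>\<^sub>M P. T0 (G0 w) = fst w"
    and G1: "G1 \<in> measurable (Y1 \<Otimes>\<^sub>M P) X1" "distr (\<beta>1 \<Otimes>\<^sub>M P) X1 G1 = \<alpha>1"
      "AE w in \<beta>1 \<Otimes>\<^sub>M P. T1 (G1 w) = fst w"
    and T0: "T0 \<in> measurable X0 Y0" and T1: "T1 \<in> measurable X1 Y1"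
  shows "\<exists>\<nu> \<in> couplings X0 X1 \<alpha>0 \<alpha>1. \<eta> = distr \<nu> (Y0 \<Otimes>\<^sub>M Y1) (\<lambda>(s, t). (T0 s, T1 t))"
proof -
  have sets_\<eta>[measurable_cong]: "sets \<eta> = sets (Y0 \<Otimes>\<^sub>M Y1)" and "finite_measure \<eta>"
    and \<beta>0: "distr \<eta> Y0 fst = \<beta>0" and \<beta>1: "distr \<eta> Y1 snd = \<beta>1"
    using \<eta> by (auto simp: couplings_def)
  interpret \<eta>: finite_measure \<eta> by fact
  interpret P: prob_space P by (rule P)
  interpret PP: prob_space "P \<Otimes>\<^sub>M P" by (rule prob_space_pair[OF P P])
  define M where "M = \<eta> \<Otimes>\<^sub>M (P \<Otimes>\<^sub>M P)"
  define \<pi>0 :: "('a \<times> 'b) \<times> 'c \<times> 'c \<Rightarrow> 'a \<times> 'c" where "\<pi>0 = (\<lambda>w. (fst (fst w), fst (snd w)))"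
  define \<pi>1 :: "('a \<times> 'b) \<times> 'c \<times> 'c \<Rightarrow> 'b \<times> 'c" where "\<pi>1 = (\<lambda>w. (snd (fst w), snd (snd w)))"
  have \<pi>0[measurable]: "\<pi>0 \<in> measurable M (Y0 \<Otimes>\<^sub>M P)" and \<pi>1[measurable]: "\<pi>1 \<in> measurable M (Y1 \<Otimes>\<^sub>M P)"
    unfolding M_def \<pi>0_def \<pi>1_def by measurable
  have marg0: "distr M (Y0 \<Otimes>\<^sub>M P) \<pi>0 = \<beta>0 \<Otimes>\<^sub>M P" and marg1: "distr M (Y1 \<Otimes>\<^sub>M P) \<pi>1 = \<beta>1 \<Otimes>\<^sub>M P"
    using distr_pair_measure_seeds[OF \<open>finite_measure \<eta>\<close> sets_\<eta> P] by (simp_all add: M_def \<pi>0_def \<pi>1_def \<beta>0 \<beta>1)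
  define \<Phi> where "\<Phi> = (\<lambda>w. (G0 (\<pi>0 w), G1 (\<pi>1 w)))"
  have \<Phi>[measurable]: "\<Phi> \<in> measurable M (X0 \<Otimes>\<^sub>M X1)"
    unfolding \<Phi>_def using G0(1) G1(1) by measurable
  define \<nu> where "\<nu> = distr M (X0 \<Otimes>\<^sub>M X1) \<Phi>"
  have "finite_measure \<nu>"
    unfolding \<nu>_def M_def
    by (intro finite_measure.finite_measure_distr finite_measure_pair_measure \<Phi>[unfolded M_def])
      (auto intro: PP.finite_measure_axioms \<eta>.finite_measure_axioms)
  moreover have "distr \<nu> X0 fst = \<alpha>0"
  proof -
    have "fst \<circ> \<Phi> = G0 \<circ> \<pi>0" by (simp add: \<Phi>_def fun_eq_iff)
    then show ?thesis
      unfolding \<nu>_def distr_distr[OF measurable_fst \<Phi>]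
      by (simp add: distr_distr[OF G0(1) \<pi>0, symmetric] marg0 G0(2))
  qed
  moreover have "distr \<nu> X1 snd = \<alpha>1"
  proof -
    have "snd \<circ> \<Phi> = G1 \<circ> \<pi>1" by (simp add: \<Phi>_def fun_eq_iff)
    then show ?thesis
      unfolding \<nu>_def distr_distr[OF measurable_snd \<Phi>]
      by (simp add: distr_distr[OF G1(1) \<pi>1, symmetric] marg1 G1(2))
  qed
  moreover have "\<eta> = distr \<nu> (Y0 \<Otimes>\<^sub>M Y1) (\<lambda>(s, t). (T0 s, T1 t))"
  proof -
    have "AE w in M. T0 (G0 (\<pi>0 w)) = fst (\<pi>0 w)"
      using G0(3) unfolding marg0[symmetric] by (rule AE_distrD[OF \<pi>0])
    moreover have "AE w in M. T1 (G1 (\<pi>1 w)) = fst (\<pi>1 w)"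
      using G1(3) unfolding marg1[symmetric] by (rule AE_distrD[OF \<pi>1])
    ultimately have AE_eq: "AE w in M. ((\<lambda>(s, t). (T0 s, T1 t)) \<circ> \<Phi>) w = fst w"
      by eventually_elim (simp add: \<Phi>_def \<pi>0_def \<pi>1_def prod_eq_iff)
    have "(\<lambda>(s, t). (T0 s, T1 t)) \<in> measurable (X0 \<Otimes>\<^sub>M X1) (Y0 \<Otimes>\<^sub>M Y1)"
      using T0 T1 by (simp add: split_beta')
    then have "\<eta> = distr M (Y0 \<Otimes>\<^sub>M Y1) ((\<lambda>(s, t). (T0 s, T1 t)) \<circ> \<Phi>)"
      using AE_eq unfolding M_def
      by (intro distr_AE_eq_fst[symmetric] PP.prob_space_axioms measurable_comp[OF \<Phi>[unfolded M_def]])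
        (simp_all add: sets_\<eta>)
    then show ?thesis
      using T0 T1 by (simp add: \<nu>_def distr_distr)
  qed
  moreover have "sets \<nu> = sets (X0 \<Otimes>\<^sub>M X1)"
    by (simp add: \<nu>_def)
  ultimately have "\<nu> \<in> couplings X0 X1 \<alpha>0 \<alpha>1 \<and> \<eta> = distr \<nu> (Y0 \<Otimes>\<^sub>M Y1) (\<lambda>(s, t). (T0 s, T1 t))"
    by (simp add: couplings_def)
  then show ?thesis by blast
qed

section \<open>Convex loops\<close>

lemma measurable_gauss: "d \<in> borel_measurable M \<Longrightarrow> gauss d \<in> measurable M Circ"
  unfolding Circ_def gauss_def by (rule measurable_restrict_space2) (auto simp: norm_sgn)

lemma convex_loop_derivative_measurable:
  assumes "convex_loop c dc"
  shows "dc \<in> borel_measurable Dom"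
proof -
  have "integrable (restrict_space lborel {0..2*pi}) dc"
    using assms by (simp add: convex_loop_def set_integrable_def integrable_restrict_space)
  then show ?thesis
    unfolding Dom_def by (rule measurable_restrict_mono[OF borel_measurable_integrable]) auto
qed

lemma density_length_measure:
  assumes "gauss dc \<in> measurable Dom Circ" and "f \<in> borel_measurable Circ"
  shows "density (length_measure dc) f = distr (density (arclen dc) (f \<circ> gauss dc)) Circ (gauss dc)"
  unfolding length_measure_def comp_def using assms
  by (intro density_distr) (auto simp: arclen_def measurable_cong_sets[OF sets_density refl])

lemma convex_loop_conditional_sampler:
  assumes "convex_loop c dc" and [measurable]: "\<sigma> \<in> borel_measurable Circ"
    and prob: "prob_space (density (length_measure dc) (\<lambda>x. ennreal (\<sigma> x)))"
  obtains G where "G \<in> measurable (Circ \<Otimes>\<^sub>M unit_interval) Dom"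
    and "distr (density (length_measure dc) (\<lambda>x. ennreal (\<sigma> x)) \<Otimes>\<^sub>M unit_interval) Dom G
      = density (arclen dc) (\<lambda>s. ennreal ((\<sigma> \<circ> gauss dc) s))"
    and "AE w in density (length_measure dc) (\<lambda>x. ennreal (\<sigma> x)) \<Otimes>\<^sub>M unit_interval. gauss dc (G w) = fst w"
proof -
  define \<alpha> where "\<alpha> = density (arclen dc) (\<lambda>s. ennreal ((\<sigma> \<circ> gauss dc) s))"
  have sets_\<alpha>: "sets \<alpha> = sets Dom"
    by (simp add: \<alpha>_def arclen_def)
  have gauss_Dom: "gauss dc \<in> measurable Dom Circ"
    using measurable_gauss[OF convex_loop_derivative_measurable[OF assms(1)]] .
  then have gauss[measurable]: "gauss dc \<in> measurable \<alpha> Circ"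
    by (simp add: measurable_cong_sets[OF sets_\<alpha> refl])
  have \<beta>_eq: "density (length_measure dc) (\<lambda>x. ennreal (\<sigma> x)) = distr \<alpha> Circ (gauss dc)"
    unfolding \<alpha>_def using density_length_measure[OF gauss_Dom, of "\<lambda>x. ennreal (\<sigma> x)"] by (simp add: comp_def)
  have "emeasure \<alpha> (space \<alpha>) = 1"
    using prob_space.emeasure_space_1[OF prob] unfolding \<beta>_eq
    by (simp add: emeasure_distr measurable_space[OF gauss] Int_absorb1 subsetI)
  then have fin: "finite_measure \<alpha>"
    by (intro finite_measureI) simp
  have sets_\<alpha>': "sets \<alpha> = sets (restrict_space borel {0..<2*pi})"
    unfolding sets_\<alpha> Dom_def by (rule sets_restrict_space_cong) simp
  have Circ_borel: "(\<lambda>y. y) \<in> borel_measurable Circ"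
    unfolding Circ_def by (rule measurable_restrict_space1) simp
  have S: "{0..<2*pi} \<in> sets borel" "0 \<in> {0..<2*pi}" "{0..<2*pi} \<subseteq> {0..2*pi}"
    by auto
  obtain G where G: "G \<in> measurable (Circ \<Otimes>\<^sub>M unit_interval) \<alpha>"
    "distr (distr \<alpha> Circ (gauss dc) \<Otimes>\<^sub>M unit_interval) \<alpha> G = \<alpha>"
    "AE w in distr \<alpha> Circ (gauss dc) \<Otimes>\<^sub>M unit_interval. gauss dc (G w) = fst w"
    by (rule conditional_sampler[OF fin sets_\<alpha>' S gauss Circ_borel])
  show thesis
  proof (rule that[unfolded \<beta>_eq \<alpha>_def[symmetric]])
    show "G \<in> measurable (Circ \<Otimes>\<^sub>M unit_interval) Dom"
      using G(1) by (simp add: measurable_cong_sets[OF refl sets_\<alpha>])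
    have "distr (distr \<alpha> Circ (gauss dc) \<Otimes>\<^sub>M unit_interval) Dom G
        = distr (distr \<alpha> Circ (gauss dc) \<Otimes>\<^sub>M unit_interval) \<alpha> G"
      by (rule distr_cong) (simp_all add: sets_\<alpha>)
    then show "distr (distr \<alpha> Circ (gauss dc) \<Otimes>\<^sub>M unit_interval) Dom G = \<alpha>"
      using G(2) by simp
  qed (fact G(3))
qed

theorem lemma3p10:
  fixes c0 c1 dc0 dc1 :: "real \<Rightarrow> complex" and \<sigma>0 \<sigma>1 :: "complex \<Rightarrow> real"
    and \<eta> :: "(complex \<times> complex) measure"
  assumes "convex_loop c0 dc0" and "convex_loop c1 dc1"
    and "\<sigma>0 \<in> borel_measurable Circ" and "\<sigma>1 \<in> borel_measurable Circ"
    and "\<forall>x\<in>sphere 0 1. \<sigma>0 x \<ge> 0" and "\<forall>x\<in>sphere 0 1. \<sigma>1 x \<ge> 0"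
    and "integrable (length_measure dc0) \<sigma>0" and "integrable (length_measure dc1) \<sigma>1"
    and "prob_space (density (length_measure dc0) (\<lambda>x. ennreal (\<sigma>0 x)))"
    and "prob_space (density (length_measure dc1) (\<lambda>x. ennreal (\<sigma>1 x)))"
    and "\<eta> \<in> couplings Circ Circ
              (density (length_measure dc0) (\<lambda>x. ennreal (\<sigma>0 x)))
              (density (length_measure dc1) (\<lambda>x. ennreal (\<sigma>1 x)))"
  shows "\<exists>\<nu> \<in> couplings Dom Dom
              (density (arclen dc0) (\<lambda>s. ennreal ((\<sigma>0 \<circ> gauss dc0) s)))
              (density (arclen dc1) (\<lambda>s. ennreal ((\<sigma>1 \<circ> gauss dc1) s))).
           \<eta> = distr \<nu> (Circ \<Otimes>\<^sub>M Circ) (\<lambda>(s, t). (gauss dc0 s, gauss dc1 t))"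
proof -
  let ?\<beta>0 = "density (length_measure dc0) (\<lambda>x. ennreal (\<sigma>0 x))"
  let ?\<beta>1 = "density (length_measure dc1) (\<lambda>x. ennreal (\<sigma>1 x))"
  obtain G0 where "G0 \<in> measurable (Circ \<Otimes>\<^sub>M unit_interval) Dom"
    "distr (?\<beta>0 \<Otimes>\<^sub>M unit_interval) Dom G0 = density (arclen dc0) (\<lambda>s. ennreal ((\<sigma>0 \<circ> gauss dc0) s))"
    "AE w in ?\<beta>0 \<Otimes>\<^sub>M unit_interval. gauss dc0 (G0 w) = fst w"
    by (rule convex_loop_conditional_sampler[OF assms(1,3,9)])
  moreover obtain G1 where "G1 \<in> measurable (Circ \<Otimes>\<^sub>M unit_interval) Dom"
    "distr (?\<beta>1 \<Otimes>\<^sub>M unit_interval) Dom G1 = density (arclen dc1) (\<lambda>s. ennreal ((\<sigma>1 \<circ> gauss dc1) s))"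
    "AE w in ?\<beta>1 \<Otimes>\<^sub>M unit_interval. gauss dc1 (G1 w) = fst w"
    by (rule convex_loop_conditional_sampler[OF assms(2,4,10)])
  moreover have "gauss dc0 \<in> measurable Dom Circ" "gauss dc1 \<in> measurable Dom Circ"
    using assms(1,2) by (simp_all add: measurable_gauss convex_loop_derivative_measurable)
  ultimately show ?thesis
    by (rule couplings_lift[OF assms(11) prob_space_unit_interval])
qed

end
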